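(* Let $S$ be a subcartesian space and $\mathcal{F}$ a family of vector fields on $S$. Then the function $\delta_{\mathcal{F}}:S\to\mathbb{Z}$, $\delta_{\mathcal{F}}(x)=\dim\check T^{\mathcal{F}}_xS$, is lower semicontinuous.
   Context: A subcartesian space is a paracompact, second-countable, Hausdorff differential space $(S,C^\infty(S))$ locally diffeomorphic to differential subspaces of Euclidean spaces. The (Zariski) tangent space $T_xS$ is the vector space of linear maps $v:C^\infty(S)\to\mathbb{R}$ with $v(fg)=f(x)v(g)+g(x)v(f)$. A derivation of $C^\infty(S)$ is a linear $X:C^\infty(S)\to C^\infty(S)$ satisfying Leibniz's rule; $X|_x(f):=(Xf)(x)$. Every derivation $X$ has, through each $x$, a unique maximal integral curve $t\mapsto\exp(tX)(x)$ (a smooth map from a maximal interval $I^X_x\ni0$ with $\frac{d}{dt}(f\circ\exp(tX)(x))=(Xf)(\exp(tX)(x))$). $X$ is a vector field if $(t,x)\mapsto\exp(tX)(x)$ is a local flow, i.e. its domain $\{(t,x):t\in I^X_x\}$ is open in $\mathbb{R}\times S$. For a family $\mathcal{F}$ of vector fields, $\check T^{\mathcal{F}}_xS$ is the linear span of $\{X|_x: X\in\mathcal{F}\}$ in $T_xS$. *)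

theory Defs
  imports "HOL-Analysis.Analysis" "HOL-Library.Function_Algebras"
begin

text \<open>R^n is represented inside nat => real as the vectors vanishing from index n on.\<close>
definition fvec :: "nat \<Rightarrow> (nat \<Rightarrow> real) set" where
  "fvec n = {x. \<forall>i\<ge>n. x i = 0}"

definition partial :: "nat \<Rightarrow> ((nat \<Rightarrow> real) \<Rightarrow> real) \<Rightarrow> (nat \<Rightarrow> real) \<Rightarrow> real" where
  "partial i F x = deriv (\<lambda>t. F (x(i := t))) (x i)"

fun Ck :: "nat \<Rightarrow> nat \<Rightarrow> ((nat \<Rightarrow> real) \<Rightarrow> real) set" where
  "Ck n 0 = {F. continuous_on (fvec n) F}"
| "Ck n (Suc k) = {F. continuous_on (fvec n) F \<and>
      (\<forall>i<n. \<forall>x\<in>fvec n. (\<lambda>t. F (x(i := t))) differentiable (at (x i))) \<and>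
      (\<forall>i<n. partial i F \<in> Ck n k)}"

definition smooth_fun :: "nat \<Rightarrow> ((nat \<Rightarrow> real) \<Rightarrow> real) \<Rightarrow> bool" where
  "smooth_fun n F \<longleftrightarrow> (\<forall>k. F \<in> Ck n k)"

definition real_smooth :: "(real \<Rightarrow> real) \<Rightarrow> bool" where
  "real_smooth F \<longleftrightarrow> (\<forall>k t. (deriv ^^ k) F differentiable (at t))"

definition rn_fun :: "nat \<Rightarrow> (nat \<Rightarrow> real) set \<Rightarrow> ((nat \<Rightarrow> real) \<Rightarrow> real) \<Rightarrow> bool" where
  "rn_fun n Q g \<longleftrightarrow> (\<forall>y\<in>Q. \<exists>W G. open W \<and> y \<in> W \<and> smooth_fun n G \<and> (\<forall>z\<in>W \<inter> Q. g z = G z))"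

definition loc_real :: "real set \<Rightarrow> (real \<Rightarrow> real) \<Rightarrow> bool" where
  "loc_real I g \<longleftrightarrow> (\<forall>s\<in>I. \<exists>W G. open W \<and> s \<in> W \<and> real_smooth G \<and> (\<forall>z\<in>W \<inter> I. g z = G z))"

section \<open>Differential spaces (carrier = UNIV of the point type)\<close>

definition ctop :: "('a \<Rightarrow> real) set \<Rightarrow> 'a topology" where
  "ctop C = topology_generated_by (insert UNIV {f -` V | f V. f \<in> C \<and> open V})"

definition differential_space :: "('a \<Rightarrow> real) set \<Rightarrow> bool" where
  "differential_space C \<longleftrightarrow>
     (\<forall>n (f :: nat \<Rightarrow> 'a \<Rightarrow> real) G. (\<forall>i<n. f i \<in> C) \<and> smooth_fun n G \<longrightarrow>
        (\<lambda>p. G (\<lambda>i. if i < n then f i p else 0)) \<in> C) \<and>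
     (\<forall>h. (\<forall>x. \<exists>U f. openin (ctop C) U \<and> x \<in> U \<and> f \<in> C \<and> (\<forall>y\<in>U. h y = f y)) \<longrightarrow> h \<in> C)"

definition loc_fun :: "('a \<Rightarrow> real) set \<Rightarrow> 'a set \<Rightarrow> ('a \<Rightarrow> real) \<Rightarrow> bool" where
  "loc_fun C U h \<longleftrightarrow> (\<forall>y\<in>U. \<exists>W f. openin (ctop C) W \<and> y \<in> W \<and> f \<in> C \<and> (\<forall>z\<in>W \<inter> U. h z = f z))"

definition paracompact :: "'a topology \<Rightarrow> bool" where
  "paracompact X \<longleftrightarrow>
     (\<forall>\<U>. (\<forall>U\<in>\<U>. openin X U) \<and> \<Union>\<U> = topspace X \<longrightarrow>
        (\<exists>\<V>. (\<forall>V\<in>\<V>. openin X V) \<and> \<Union>\<V> = topspace X \<and> (\<forall>V\<in>\<V>. \<exists>U\<in>\<U>. V \<subseteq> U)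
              \<and> locally_finite_in X \<V>))"

definition subcartesian :: "('a \<Rightarrow> real) set \<Rightarrow> bool" where
  "subcartesian C \<longleftrightarrow> differential_space C \<and> paracompact (ctop C) \<and>
     second_countable (ctop C) \<and> Hausdorff_space (ctop C) \<and>
     (\<forall>x. \<exists>U (\<phi> :: 'a \<Rightarrow> nat \<Rightarrow> real) n. openin (ctop C) U \<and> x \<in> U \<and>
          \<phi> ` U \<subseteq> fvec n \<and> inj_on \<phi> U \<and>
          (\<forall>g. rn_fun n (\<phi> ` U) g \<longrightarrow> loc_fun C U (g \<circ> \<phi>)) \<and>
          (\<forall>h. loc_fun C U h \<longrightarrow> rn_fun n (\<phi> ` U) (h \<circ> inv_into U \<phi>)))"

definition derivation :: "('a \<Rightarrow> real) set \<Rightarrow> (('a \<Rightarrow> real) \<Rightarrow> ('a \<Rightarrow> real)) \<Rightarrow> bool" where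
  "derivation C X \<longleftrightarrow> (\<forall>f\<in>C. X f \<in> C) \<and>
     (\<forall>f\<in>C. \<forall>g\<in>C. \<forall>a b. X (\<lambda>p. a * f p + b * g p) = (\<lambda>p. a * X f p + b * X g p)) \<and>
     (\<forall>f\<in>C. \<forall>g\<in>C. X (\<lambda>p. f p * g p) = (\<lambda>p. f p * X g p + g p * X f p))"

definition integral_curve :: "('a \<Rightarrow> real) set \<Rightarrow> (('a \<Rightarrow> real) \<Rightarrow> ('a \<Rightarrow> real)) \<Rightarrow> real set \<Rightarrow> (real \<Rightarrow> 'a) \<Rightarrow> bool" where
  "integral_curve C X I c \<longleftrightarrow> is_interval I \<and> 0 \<in> I \<and>
     (\<forall>f\<in>C. loc_real I (f \<circ> c) \<and>
        (\<forall>t\<in>I. ((f \<circ> c) has_real_derivative X f (c t)) (at t within I)))"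

definition max_dom :: "('a \<Rightarrow> real) set \<Rightarrow> (('a \<Rightarrow> real) \<Rightarrow> ('a \<Rightarrow> real)) \<Rightarrow> 'a \<Rightarrow> real set" where
  "max_dom C X x = \<Union>{I. \<exists>c. integral_curve C X I c \<and> c 0 = x}"

definition vector_field :: "('a \<Rightarrow> real) set \<Rightarrow> (('a \<Rightarrow> real) \<Rightarrow> ('a \<Rightarrow> real)) \<Rightarrow> bool" where
  "vector_field C X \<longleftrightarrow> derivation C X \<and>
     openin (prod_topology euclideanreal (ctop C)) {(t, x). t \<in> max_dom C X x}"

definition tvec :: "('a \<Rightarrow> real) set \<Rightarrow> (('a \<Rightarrow> real) \<Rightarrow> ('a \<Rightarrow> real)) \<Rightarrow> 'a \<Rightarrow> ('a \<Rightarrow> real) \<Rightarrow> real" where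
  "tvec C X x = (\<lambda>f. if f \<in> C then X f x else 0)"

definition delta :: "('a \<Rightarrow> real) set \<Rightarrow> (('a \<Rightarrow> real) \<Rightarrow> ('a \<Rightarrow> real)) set \<Rightarrow> 'a \<Rightarrow> int" where
  "delta C F x = int (vector_space.dim (\<lambda>(a::real) v. \<lambda>f. a * v f) {tvec C X x | X. X \<in> F})"

definition lower_semicontinuous :: "'a topology \<Rightarrow> ('a \<Rightarrow> int) \<Rightarrow> bool" where
  "lower_semicontinuous T d \<longleftrightarrow>
     (\<forall>x\<in>topspace T. \<forall>r::real. r < real_of_int (d x) \<longrightarrow>
        (\<exists>U. openin T U \<and> x \<in> U \<and> (\<forall>y\<in>U. r < real_of_int (d y))))"

end

theory Submission
  imports Defs
begin

text \<open>If X_1|x, ..., X_k|x are linearly independent, so are X_1|y, ..., X_k|y for y near x: the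
  functions y \<mapsto> X_j f y are continuous because X_j f is smooth, and linear independence of
  finitely many continuously varying families of functionals is an open condition (eliminate the
  last family using an f on which it does not vanish, and induct on k). Comparing dimensions
  requires the span of all X|y to be finite dimensional. This comes from a chart \<phi> around y: if
  f = G \<circ> \<phi> near y, differentiating f \<circ> c = G \<circ> \<phi> \<circ> c along an integral curve c of X through y
  gives X f y = \<Sum>_i \<partial>_i G (\<phi> y) \<cdot> X \<phi>_i y.\<close>

lemma topspace_ctop [simp]: "topspace (ctop C) = UNIV"
  unfolding ctop_def by auto

lemma openin_ctop_UNIV [simp]: "openin (ctop C) UNIV"
  using openin_topspace[of "ctop C"] by simp

lemma openin_ctop_vimage: "f \<in> C \<Longrightarrow> open V \<Longrightarrow> openin (ctop C) (f -` V)"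
  unfolding ctop_def openin_topology_generated_by_iff
  by (rule generate_topology_on.Basis) blast

lemma continuous_map_ctop: "f \<in> C \<Longrightarrow> continuous_map (ctop C) euclideanreal f"
  unfolding continuous_map_def by (simp add: openin_ctop_vimage[unfolded vimage_def])

lemma eventually_in_openin_ctop:
  assumes lim: "\<forall>f\<in>C. ((\<lambda>t. f (c t)) \<longlongrightarrow> f y) F"
    and W: "openin (ctop C) W" and y: "y \<in> W"
  shows "\<forall>\<^sub>F t in F. c t \<in> W"
proof -
  have "generate_topology_on (insert UNIV {f -` V | f V. f \<in> C \<and> open V}) W"
    using W unfolding ctop_def openin_topology_generated_by_iff .
  then show ?thesis using y
  proof (induction rule: generate_topology_on.induct)
    case (Int a b) then show ?case by (auto intro: eventually_conj)
  next
    case (UN K)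
    then obtain k where "k \<in> K" "y \<in> k" by auto
    with UN have "\<forall>\<^sub>F t in F. c t \<in> k" by auto
    then show ?case by (rule eventually_mono) (use \<open>k \<in> K\<close> in auto)
  next
    case (Basis s)
    show ?case
    proof (cases "s = UNIV")
      case False
      with Basis obtain f V where fV: "s = f -` V" "f \<in> C" "open V" by auto
      with Basis have "f y \<in> V" by auto
      from topological_tendstoD[OF bspec[OF lim fV(2)] fV(3) this] show ?thesis
        by (simp add: fV(1))
    qed simp
  qed simp
qed

lemma tendsto_fun_coordinatewise:
  fixes Q :: "'b \<Rightarrow> 'i \<Rightarrow> 'c::topological_space"
  assumes "\<And>i. ((\<lambda>t. Q t i) \<longlongrightarrow> q i) F"
  shows "(Q \<longlongrightarrow> q) F"
proof (rule topological_tendstoI)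
  fix U assume U: "open U" "q \<in> U"
  then have "openin (product_topology (\<lambda>i. euclidean) UNIV) U" by (simp add: open_fun_def)
  from product_topology_open_contains_basis[OF this U(2)] obtain X where
    X: "q \<in> (\<Pi>\<^sub>E i\<in>UNIV. X i)" "\<forall>i. open (X i)" "finite {i. X i \<noteq> UNIV}" "(\<Pi>\<^sub>E i\<in>UNIV. X i) \<subseteq> U"
    by auto
  have "\<forall>i\<in>{i. X i \<noteq> UNIV}. \<forall>\<^sub>F t in F. Q t i \<in> X i"
    using X(1,2) assms topological_tendstoD by (blast intro: PiE_mem)
  from eventually_ball_finite[OF X(3) this] show "\<forall>\<^sub>F t in F. Q t \<in> U"
  proof (rule eventually_mono)
    fix t assume "\<forall>i\<in>{i. X i \<noteq> UNIV}. Q t i \<in> X i"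
    then have "Q t \<in> (\<Pi>\<^sub>E i\<in>UNIV. X i)" by (auto simp: PiE_def)
    then show "Q t \<in> U" using X(4) by auto
  qed
qed

definition lin_indep_on :: "nat \<Rightarrow> 'b set \<Rightarrow> (nat \<Rightarrow> 'b \<Rightarrow> real) \<Rightarrow> bool" where
  "lin_indep_on k D w \<longleftrightarrow> (\<forall>a. (\<forall>f\<in>D. (\<Sum>j<k. a j * w j f) = 0) \<longrightarrow> (\<forall>j<k. a j = 0))"

lemma lin_indep_onI:
  "(\<And>a j. (\<And>f. f \<in> D \<Longrightarrow> (\<Sum>j<k. a j * w j f) = 0) \<Longrightarrow> j < k \<Longrightarrow> a j = 0) \<Longrightarrow> lin_indep_on k D w"
  unfolding lin_indep_on_def by blast

lemma lin_indep_onD: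
  "lin_indep_on k D w \<Longrightarrow> (\<And>f. f \<in> D \<Longrightarrow> (\<Sum>j<k. a j * w j f) = 0) \<Longrightarrow> j < k \<Longrightarrow> a j = 0"
  unfolding lin_indep_on_def by blast

lemma lin_indep_on_Suc_nonzero:
  assumes "lin_indep_on (Suc k) D w"
  shows "\<exists>g\<in>D. w k g \<noteq> 0"
proof (rule ccontr)
  assume "\<not> (\<exists>g\<in>D. w k g \<noteq> 0)"
  then have "(\<Sum>j<Suc k. (if j = k then 1 else 0) * w j f) = 0" if "f \<in> D" for f
    using that by simp
  from lin_indep_onD[OF assms this, of k] show False by simp
qed

lemma lin_indep_on_Suc_eliminate:
  assumes g: "g \<in> D" "w k g \<noteq> 0"
  shows "lin_indep_on (Suc k) D w \<longleftrightarrow> lin_indep_on k D (\<lambda>j f. w j f - w j g / w k g * w k f)"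
    (is "_ \<longleftrightarrow> lin_indep_on k D ?w")
proof -
  have elim: "(\<Sum>j<k. a j * ?w j f) = (\<Sum>j<k. a j * w j f) - (\<Sum>j<k. a j * w j g) / w k g * w k f"
    for a f
  proof -
    have "(\<Sum>j<k. a j * ?w j f) = (\<Sum>j<k. a j * w j f - a j * w j g / w k g * w k f)"
      by (rule sum.cong) (simp_all add: algebra_simps)
    also have "\<dots> = (\<Sum>j<k. a j * w j f) - (\<Sum>j<k. a j * w j g / w k g * w k f)"
      by (rule sum_subtractf)
    also have "(\<Sum>j<k. a j * w j g / w k g * w k f) = (\<Sum>j<k. a j * w j g) / w k g * w k f"
      by (simp add: sum_distrib_right sum_divide_distrib)
    finally show "(\<Sum>j<k. a j * ?w j f) = (\<Sum>j<k. a j * w j f) - (\<Sum>j<k. a j * w j g) / w k g * w k f" .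
  qed
  show ?thesis
  proof
    assume indep: "lin_indep_on (Suc k) D w"
    show "lin_indep_on k D ?w"
    proof (rule lin_indep_onI)
      fix a j assume a: "\<And>f. f \<in> D \<Longrightarrow> (\<Sum>j<k. a j * ?w j f) = 0" and j: "j < k"
      \<comment> \<open>extend a by the coefficient of w k that the elimination subtracted\<close>
      define a' where "a' j = (if j < k then a j else - (\<Sum>j<k. a j * w j g) / w k g)" for j
      have "(\<Sum>j<Suc k. a' j * w j f) = (\<Sum>j<k. a j * ?w j f)" for f
        unfolding elim by (simp add: a'_def)
      with a have "(\<Sum>j<Suc k. a' j * w j f) = 0" if "f \<in> D" for f
        using that by simp
      from lin_indep_onD[OF indep this, of j] j show "a j = 0" by (simp add: a'_def)
    qed
  next
    assume indep: "lin_indep_on k D ?w"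
    show "lin_indep_on (Suc k) D w"
    proof (rule lin_indep_onI)
      fix a j assume a: "\<And>f. f \<in> D \<Longrightarrow> (\<Sum>j<Suc k. a j * w j f) = 0" and j: "j < Suc k"
      have "(\<Sum>j<k. a j * w j g) + a k * w k g = 0" using a[OF g(1)] by simp
      then have ak: "a k = - (\<Sum>j<k. a j * w j g) / w k g" using g(2) by (simp add: field_simps)
      have "(\<Sum>j<k. a j * ?w j f) = (\<Sum>j<Suc k. a j * w j f)" for f
        unfolding elim by (simp add: ak)
      with a have "(\<Sum>j<k. a j * ?w j f) = 0" if "f \<in> D" for f
        using that by simp
      then have "\<forall>i<k. a i = 0" using lin_indep_onD[OF indep] by blast
      with ak j show "a j = 0" by (auto simp: less_Suc_eq)
    qed
  qed
qed

lemma lin_indep_on_locally: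
  assumes "openin T S" "x \<in> S"
    and "\<forall>j<k. \<forall>f\<in>D. continuous_map (subtopology T S) euclideanreal (\<lambda>y. w y j f)"
    and "lin_indep_on k D (w x)"
  shows "\<exists>U. openin T U \<and> x \<in> U \<and> (\<forall>y\<in>U. lin_indep_on k D (w y))"
  using assms
proof (induction k arbitrary: w S)
  case 0
  have "lin_indep_on 0 D (w y)" for y by (rule lin_indep_onI) simp
  with "0.prems"(1,2) show ?case by blast
next
  case (Suc k)
  obtain g where g: "g \<in> D" "w x k g \<noteq> 0"
    using lin_indep_on_Suc_nonzero[OF Suc.prems(4)] by blast
  have cont: "continuous_map (subtopology T S) euclideanreal (\<lambda>y. w y j f)"
    if "j < Suc k" "f \<in> D" for j f
    using Suc.prems(3) that by blast
  define S' where "S' = {y \<in> topspace (subtopology T S). w y k g \<in> - {0}}"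
  have "openin (subtopology T S) S'"
    unfolding S'_def
    by (rule openin_continuous_map_preimage[OF cont[OF lessI g(1)]]) (simp add: open_Compl)
  then have S': "openin T S'" using Suc.prems(1) openin_trans_full by blast
  have "S' \<subseteq> S" and nonzero: "\<And>y. y \<in> S' \<Longrightarrow> w y k g \<noteq> 0"
    unfolding S'_def by auto
  have "x \<in> S'"
    unfolding S'_def using Suc.prems(1,2) g(2) openin_subset by auto
  define w' where "w' y = (\<lambda>j f. w y j f - w y j g / w y k g * w y k f)" for y
  have cont': "\<forall>j<k. \<forall>f\<in>D. continuous_map (subtopology T S') euclideanreal (\<lambda>y. w' y j f)"
  proof (intro allI impI ballI)
    fix j f assume jf: "j < k" "f \<in> D"
    have "continuous_map (subtopology T S') euclideanreal (\<lambda>y. w y i h)"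
      if "i < Suc k" "h \<in> D" for i h
      using cont[OF that] continuous_map_from_subtopology_mono \<open>S' \<subseteq> S\<close> by blast
    then have c: "continuous_map (subtopology T S') euclideanreal (\<lambda>y. w y j f)"
      "continuous_map (subtopology T S') euclideanreal (\<lambda>y. w y j g)"
      "continuous_map (subtopology T S') euclideanreal (\<lambda>y. w y k f)"
      "continuous_map (subtopology T S') euclideanreal (\<lambda>y. w y k g)"
      using jf g by simp_all
    have "continuous_map (subtopology T S') euclideanreal (\<lambda>y. w y j g / w y k g)"
      by (rule continuous_map_real_divide[OF c(2,4)]) (use nonzero in simp)
    then show "continuous_map (subtopology T S') euclideanreal (\<lambda>y. w' y j f)"
      unfolding w'_def by (intro continuous_map_diff continuous_map_real_mult c(1,3))
  qed
  have "lin_indep_on k D (w' x)"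
    using Suc.prems(4) lin_indep_on_Suc_eliminate[of g D "w x", OF g] by (simp add: w'_def)
  from Suc.IH[OF S' \<open>x \<in> S'\<close> cont' this] obtain U
    where U: "openin T U" "x \<in> U" "\<forall>y\<in>U. lin_indep_on k D (w' y)"
    by blast
  have "lin_indep_on (Suc k) D (w y)" if "y \<in> U \<inter> S'" for y
    using U(3) that lin_indep_on_Suc_eliminate[of g D "w y", OF g(1) nonzero] by (simp add: w'_def)
  with U(1,2) S' \<open>x \<in> S'\<close> show ?case by blast
qed

lemma mvt_between:
  fixes h :: "real \<Rightarrow> real"
  assumes "\<And>s. (h has_real_derivative h' s) (at s)"
  shows "\<exists>\<xi>. min a b \<le> \<xi> \<and> \<xi> \<le> max a b \<and> h b - h a = (b - a) * h' \<xi>"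
proof (cases a b rule: linorder_cases)
  case less
  from MVT2[OF less assms] show ?thesis by (metis less less_imp_le max.absorb2 min.absorb1)
next
  case equal then show ?thesis by auto
next
  case greater
  from MVT2[OF greater assms] obtain z where "z > b" "z < a" "h a - h b = (a - b) * h' z" by blast
  then show ?thesis by (intro exI[of _ z]) (auto simp: algebra_simps)
qed

text \<open>q t is the partial derivative at a mean-value point between p m and u t.\<close>
lemma C1_increment_factorization:
  fixes G :: "(nat \<Rightarrow> real) \<Rightarrow> real" and P :: "'b \<Rightarrow> nat \<Rightarrow> real"
  assumes G: "G \<in> Ck n (Suc 0)" and m: "m < n"
    and P: "\<And>t. P t \<in> fvec n" "\<And>t. P t m = p m" "\<And>i. ((\<lambda>t. P t i) \<longlongrightarrow> p i) F"
    and p: "p \<in> fvec n"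
    and u: "(u \<longlongrightarrow> p m) F"
  obtains q where "(q \<longlongrightarrow> partial m G p) F"
    "\<And>t. G ((P t)(m := u t)) - G (P t) = (u t - p m) * q t"
proof -
  have diff: "\<And>x. x \<in> fvec n \<Longrightarrow> (\<lambda>s. G (x(m := s))) differentiable (at (x m))"
    and cont: "continuous_on (fvec n) (partial m G)"
    using G m by auto
  have upd: "z(m := s) \<in> fvec n" if "z \<in> fvec n" for z s
    using that m unfolding fvec_def by auto
  have deriv_m: "((\<lambda>s. G (z(m := s))) has_real_derivative partial m G (z(m := s))) (at s)"
    if "z \<in> fvec n" for z s
    using diff[OF upd[OF that, of s]]
    by (simp add: partial_def DERIV_deriv_iff_real_differentiable[symmetric])
  have "\<forall>t. \<exists>\<xi>. min (p m) (u t) \<le> \<xi> \<and> \<xi> \<le> max (p m) (u t) \<and>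
      G ((P t)(m := u t)) - G ((P t)(m := p m)) = (u t - p m) * partial m G ((P t)(m := \<xi>))"
    using mvt_between[OF deriv_m[OF P(1)]] by blast
  then obtain \<xi> where \<xi>: "\<And>t. min (p m) (u t) \<le> \<xi> t" "\<And>t. \<xi> t \<le> max (p m) (u t)"
    "\<And>t. G ((P t)(m := u t)) - G ((P t)(m := p m)) = (u t - p m) * partial m G ((P t)(m := \<xi> t))"
    by metis
  define Q where "Q t = (P t)(m := \<xi> t)" for t
  have \<xi>_lim: "(\<xi> \<longlongrightarrow> p m) F"
  proof (rule tendsto_sandwich)
    show "((\<lambda>t. min (p m) (u t)) \<longlongrightarrow> p m) F" "((\<lambda>t. max (p m) (u t)) \<longlongrightarrow> p m) F"
      using tendsto_min[OF tendsto_const u, of "p m"] tendsto_max[OF tendsto_const u, of "p m"]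
      by simp_all
  qed (use \<xi>(1,2) in simp_all)
  have "(Q \<longlongrightarrow> p) F"
  proof (rule tendsto_fun_coordinatewise)
    fix i
    show "((\<lambda>t. Q t i) \<longlongrightarrow> p i) F"
      unfolding Q_def using \<xi>_lim P(3)[of i] by (cases "i = m") simp_all
  qed
  then have "((\<lambda>t. partial m G (Q t)) \<longlongrightarrow> partial m G p) F"
    by (rule continuous_on_tendsto_compose[OF cont _ p]) (simp add: Q_def upd[OF P(1)])
  moreover have "G ((P t)(m := u t)) - G (P t) = (u t - p m) * partial m G (Q t)" for t
    using \<xi>(3)[of t] P(2)[of t] by (simp add: Q_def fun_upd_idem)
  ultimately show thesis using that by blast
qed

lemma has_real_derivative_C1_comp:
  fixes G :: "(nat \<Rightarrow> real) \<Rightarrow> real" and \<Phi> :: "real \<Rightarrow> nat \<Rightarrow> real"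
  assumes G: "G \<in> Ck n (Suc 0)"
    and \<Phi>: "\<And>t. \<Phi> t \<in> fvec n"
    and d: "\<And>i. i < n \<Longrightarrow> ((\<lambda>t. \<Phi> t i) has_real_derivative d i) (at 0 within J)"
  shows "((\<lambda>t. G (\<Phi> t)) has_real_derivative (\<Sum>i<n. partial i G (\<Phi> 0) * d i)) (at 0 within J)"
proof -
  \<comment> \<open>telescope, moving one coordinate at a time from \<Phi> 0 to \<Phi> t\<close>
  define P where "P m t = (\<lambda>i. if i < m then \<Phi> t i else \<Phi> 0 i)" for m t
  have P_fvec: "P m t \<in> fvec n" for m t
    using \<Phi> unfolding P_def fvec_def by auto
  have \<Phi>_lim: "((\<lambda>t. \<Phi> t i) \<longlongrightarrow> \<Phi> 0 i) (at 0 within J)" for i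
  proof (cases "i < n")
    case True
    from DERIV_continuous[OF d[OF True]] show ?thesis by (simp add: continuous_within)
  next
    case False
    then have "\<Phi> t i = 0" for t using \<Phi> unfolding fvec_def by auto
    then show ?thesis by simp
  qed
  have "((\<lambda>t. G (P m t)) has_real_derivative (\<Sum>i<m. partial i G (\<Phi> 0) * d i)) (at 0 within J)"
    if "m \<le> n" for m
    using that
  proof (induction m)
    case 0
    have "P 0 t = \<Phi> 0" for t unfolding P_def by auto
    then show ?case by simp
  next
    case (Suc m)
    then have m: "m < n" by simp
    have P_lim: "((\<lambda>t. P m t i) \<longlongrightarrow> \<Phi> 0 i) (at 0 within J)" for i
      unfolding P_def using \<Phi>_lim by (cases "i < m") simp_all
    have P_m: "P m t m = \<Phi> 0 m" for t unfolding P_def by simp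
    obtain q where q: "(q \<longlongrightarrow> partial m G (\<Phi> 0)) (at 0 within J)"
      "\<And>t. G ((P m t)(m := \<Phi> t m)) - G (P m t) = (\<Phi> t m - \<Phi> 0 m) * q t"
      using C1_increment_factorization[OF G m P_fvec P_m P_lim \<Phi> \<Phi>_lim] by blast
    have P_Suc: "P (Suc m) t = (P m t)(m := \<Phi> t m)" for t
      unfolding P_def by auto
    have "((\<lambda>t. (G (P m t) - G (P m 0)) / (t - 0) + (\<Phi> t m - \<Phi> 0 m) / (t - 0) * q t)
        \<longlongrightarrow> (\<Sum>i<m. partial i G (\<Phi> 0) * d i) + d m * partial m G (\<Phi> 0)) (at 0 within J)"
      using Suc.IH Suc.prems d[OF m] q(1)
      by (intro tendsto_add tendsto_mult) (auto simp: has_field_derivative_iff)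
    moreover have "(G (P m t) - G (P m 0)) / (t - 0) + (\<Phi> t m - \<Phi> 0 m) / (t - 0) * q t
        = (G (P (Suc m) t) - G (P (Suc m) 0)) / (t - 0)" for t
    proof -
      have "(\<Phi> t m - \<Phi> 0 m) / (t - 0) * q t = (G (P (Suc m) t) - G (P m t)) / (t - 0)"
        using q(2)[of t] by (simp add: P_Suc)
      moreover have "P k 0 = \<Phi> 0" for k unfolding P_def by simp
      ultimately show ?thesis by (simp add: diff_divide_distrib)
    qed
    ultimately show ?case
      by (simp add: has_field_derivative_iff mult.commute)
  qed
  moreover have "P n = \<Phi>"
    using \<Phi> unfolding P_def fvec_def by (auto simp: fun_eq_iff)
  ultimately show ?thesis by auto
qed

lemma real_smooth_const: "real_smooth (\<lambda>_. c)"
proof -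
  have "(deriv ^^ Suc k) (\<lambda>_::real. c) = (\<lambda>_. 0)" for k
    by (induction k) simp_all
  then show ?thesis
    unfolding real_smooth_def by (metis differentiable_const funpow_0 not0_implies_Suc)
qed

lemma integral_curve_const: "integral_curve C X {0} (\<lambda>_. y)"
  unfolding integral_curve_def
proof (intro conjI ballI)
  show "is_interval {0::real}" unfolding is_interval_1 by auto
  fix f assume "f \<in> C"
  show "loc_real {0} (f \<circ> (\<lambda>_. y))"
    unfolding loc_real_def
    by (intro ballI exI[of _ UNIV] exI[of _ "\<lambda>_. f y"]) (auto simp: real_smooth_const)
  fix t :: real assume "t \<in> {0}"
  then show "((f \<circ> (\<lambda>_. y)) has_real_derivative X f ((\<lambda>_. y) t)) (at t within {0})"
    by (simp add: has_field_derivative_def has_derivative_within_singleton_iff bounded_linear_mult_right)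
qed simp

text \<open>Openness of the flow domain is what guarantees a non-degenerate integral curve.\<close>
lemma vector_field_integral_curve_at_0:
  assumes "vector_field C X"
  obtains c J where "c 0 = y" "at (0::real) within J \<noteq> bot"
    "\<And>f. f \<in> C \<Longrightarrow> ((\<lambda>t. f (c t)) has_real_derivative X f y) (at 0 within J)"
proof -
  have "(0::real) \<in> max_dom C X y"
    unfolding max_dom_def using integral_curve_const[of C X y] by blast
  then have "(0::real, y) \<in> {(t, x). t \<in> max_dom C X x}" by simp
  moreover have "openin (prod_topology euclideanreal (ctop C)) {(t, x). t \<in> max_dom C X x}"
    using assms unfolding vector_field_def by blast
  ultimately obtain U V where UV: "openin euclideanreal U" "0 \<in> U" "y \<in> V"
    "U \<times> V \<subseteq> {(t, x). t \<in> max_dom C X x}"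
    unfolding openin_prod_topology_alt by (elim allE impE) blast+
  have "open U" using UV(1) by (simp only: open_openin)
  then obtain e where e: "e > 0" "ball 0 e \<subseteq> U"
    using UV(2) open_contains_ball_eq by blast
  then have "e/2 \<in> U" by (simp add: subset_iff dist_real_def)
  with UV(3,4) have "e/2 \<in> max_dom C X y" by blast
  then obtain I c where Ic: "integral_curve C X I c" "c 0 = y" "e/2 \<in> I"
    unfolding max_dom_def by blast
  have I: "is_interval I" "0 \<in> I" using Ic(1) unfolding integral_curve_def by auto
  have sub: "{0..e/2} \<subseteq> I"
  proof
    fix t assume "t \<in> {0..e/2}"
    then show "t \<in> I" using mem_is_interval_1_I[OF I Ic(3)] by simp
  qed
  have "((\<lambda>t. f (c t)) has_real_derivative X f y) (at 0 within {0..e/2})" if "f \<in> C" for f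
  proof -
    have "((f \<circ> c) has_real_derivative X f (c 0)) (at 0 within I)"
      using Ic(1) I(2) that unfolding integral_curve_def by blast
    then show ?thesis using DERIV_subset[OF _ sub] Ic(2) by (simp add: o_def)
  qed
  moreover have "at (0::real) within {0..e/2} \<noteq> bot"
    using e(1) by (simp add: at_within_Icc_at_right)
  ultimately show thesis using that[of c "{0..e/2}"] Ic(2) by blast
qed

lemma Ck_const: "(\<lambda>_. c) \<in> Ck n k"
proof (induction k arbitrary: c)
  case (Suc k)
  have "partial i (\<lambda>_. c) = (\<lambda>_. 0)" for i
    unfolding partial_def by simp
  with Suc show ?case by simp
qed simp

lemma smooth_fun_coordinate: "smooth_fun n (\<lambda>z. z m)"
  unfolding smooth_fun_def
proof
  fix k
  show "(\<lambda>z. z m) \<in> Ck n k"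
  proof (cases k)
    case 0
    then show ?thesis
      by (simp add: continuous_on_subset[OF continuous_on_product_coordinates])
  next
    case (Suc k')
    have "partial i (\<lambda>z. z m) = (\<lambda>_. if i = m then 1 else 0)" for i
      unfolding partial_def by (cases "i = m") auto
    moreover have "(\<lambda>t. (x(i := t)) m) differentiable (at s)" for x :: "nat \<Rightarrow> real" and i s
      by (cases "m = i") auto
    ultimately show ?thesis
      using Suc by (simp add: Ck_const continuous_on_subset[OF continuous_on_product_coordinates])
  qed
qed

lemma chart_coordinates:
  assumes U: "openin (ctop C) U" "y \<in> U"
    and smooth_pullback: "\<And>g. rn_fun n (\<phi> ` U) g \<Longrightarrow> loc_fun C U (g \<circ> \<phi>)"
  obtains W fc where "openin (ctop C) W" "y \<in> W" "W \<subseteq> U"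
    "\<And>i. fc i \<in> C" "\<And>i z. i < n \<Longrightarrow> z \<in> W \<Longrightarrow> fc i z = \<phi> z i"
proof -
  have "\<forall>i. \<exists>Wi f. openin (ctop C) Wi \<and> y \<in> Wi \<and> f \<in> C \<and> (\<forall>z\<in>Wi \<inter> U. f z = \<phi> z i)"
  proof
    fix i
    have "rn_fun n (\<phi> ` U) (\<lambda>z. z i)"
      unfolding rn_fun_def
    proof (intro ballI exI[of _ UNIV] exI[of _ "\<lambda>z. z i"] conjI)
      show "smooth_fun n (\<lambda>z. z i)" by (rule smooth_fun_coordinate)
    qed simp_all
    from smooth_pullback[OF this] U(2) obtain Wi f where
      "openin (ctop C) Wi" "y \<in> Wi" "f \<in> C" "\<forall>z\<in>Wi \<inter> U. ((\<lambda>z. z i) \<circ> \<phi>) z = f z"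
      unfolding loc_fun_def by blast
    then show "\<exists>Wi f. openin (ctop C) Wi \<and> y \<in> Wi \<and> f \<in> C \<and> (\<forall>z\<in>Wi \<inter> U. f z = \<phi> z i)"
      by (intro exI[of _ Wi] exI[of _ f]) auto
  qed
  from choice[OF this] obtain Wc
    where "\<forall>i. \<exists>f. openin (ctop C) (Wc i) \<and> y \<in> Wc i \<and> f \<in> C \<and> (\<forall>z\<in>Wc i \<inter> U. f z = \<phi> z i)" ..
  from choice[OF this] obtain fc
    where "\<forall>i. openin (ctop C) (Wc i) \<and> y \<in> Wc i \<and> fc i \<in> C \<and> (\<forall>z\<in>Wc i \<inter> U. fc i z = \<phi> z i)" ..
  then have Wc: "\<And>i. openin (ctop C) (Wc i)" "\<And>i. y \<in> Wc i" "\<And>i. fc i \<in> C"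
    "\<And>i z. z \<in> Wc i \<Longrightarrow> z \<in> U \<Longrightarrow> fc i z = \<phi> z i"
    by blast+
  define W where "W = U \<inter> ((\<Inter>i<n. Wc i) \<inter> topspace (ctop C))"
  show thesis
  proof (rule that[of W fc])
    show "openin (ctop C) W"
      unfolding W_def by (intro openin_Int[OF U(1)] openin_INT) (simp_all add: Wc(1))
    show "y \<in> W" "W \<subseteq> U" unfolding W_def using U(2) Wc(2) by auto
    show "fc i z = \<phi> z i" if "i < n" "z \<in> W" for i z
      using Wc(4)[of z i] that unfolding W_def by simp
  qed (rule Wc(3))
qed

lemma chart_representative:
  assumes smooth_pushforward: "\<And>h. loc_fun C U h \<Longrightarrow> rn_fun n (\<phi> ` U) (h \<circ> inv_into U \<phi>)"
    and "y \<in> U" "f \<in> C"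
  obtains V G where "open V" "\<phi> y \<in> V" "smooth_fun n G"
    "\<And>z. z \<in> V \<Longrightarrow> z \<in> \<phi> ` U \<Longrightarrow> f (inv_into U \<phi> z) = G z"
proof -
  have "loc_fun C U f" unfolding loc_fun_def using assms(3) openin_ctop_UNIV by blast
  from smooth_pushforward[OF this] assms(2) obtain V G where
    "open V" "\<phi> y \<in> V" "smooth_fun n G" "\<forall>z\<in>V \<inter> \<phi> ` U. (f \<circ> inv_into U \<phi>) z = G z"
    unfolding rn_fun_def by blast
  then show thesis by (intro that[of V G]) auto
qed

text \<open>Near y we have f = G \<circ> \<phi>, so along an integral curve c of X through y the chain rule
  applied to f \<circ> c = G \<circ> \<phi> \<circ> c computes X f y.\<close>
lemma vector_field_chart_expansion:
  assumes X: "vector_field C X" and f: "f \<in> C"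
    and chart: "\<phi> ` U \<subseteq> fvec n" "inj_on \<phi> U"
    and W: "openin (ctop C) W" "y \<in> W" "W \<subseteq> U"
    and fc: "\<And>i. fc i \<in> C" "\<And>i z. i < n \<Longrightarrow> z \<in> W \<Longrightarrow> fc i z = \<phi> z i"
    and G: "open V" "\<phi> y \<in> V" "smooth_fun n G" "\<And>z. z \<in> V \<Longrightarrow> z \<in> \<phi> ` U \<Longrightarrow> f (inv_into U \<phi> z) = G z"
  shows "X f y = (\<Sum>i<n. partial i G (\<phi> y) * X (fc i) y)"
proof -
  obtain c J where c: "c 0 = y" "at (0::real) within J \<noteq> bot"
    and der0: "\<And>g. g \<in> C \<Longrightarrow> ((\<lambda>t. g (c t)) has_real_derivative X g y) (at 0 within J)"
    using vector_field_integral_curve_at_0[OF X] by blast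
  have lim: "\<forall>g\<in>C. ((\<lambda>t. g (c t)) \<longlongrightarrow> g y) (at 0 within J)"
  proof
    fix g assume "g \<in> C"
    from DERIV_continuous[OF der0[OF this]] show "((\<lambda>t. g (c t)) \<longlongrightarrow> g y) (at 0 within J)"
      by (simp add: continuous_within c(1))
  qed
  define \<Phi> where "\<Phi> t = (\<lambda>i. if i < n then fc i (c t) else 0)" for t
  have \<Phi>_fvec: "\<Phi> t \<in> fvec n" for t unfolding \<Phi>_def fvec_def by auto
  have \<phi>_c: "\<phi> (c t) = \<Phi> t" if "c t \<in> W" for t
  proof
    fix i
    have "\<phi> (c t) \<in> fvec n" using chart(1) W(3) that by blast
    then show "\<phi> (c t) i = \<Phi> t i"
      using fc(2)[OF _ that] unfolding \<Phi>_def fvec_def by auto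
  qed
  have \<phi>_y: "\<phi> y = \<Phi> 0" using \<phi>_c[of 0] c(1) W(2) by simp
  have "((\<lambda>t. \<Phi> t i) \<longlongrightarrow> \<Phi> 0 i) (at 0 within J)" for i
    using lim fc(1) c(1) by (cases "i < n") (auto simp: \<Phi>_def)
  then have "(\<Phi> \<longlongrightarrow> \<Phi> 0) (at 0 within J)" by (rule tendsto_fun_coordinatewise)
  then have "\<forall>\<^sub>F t in at 0 within J. \<Phi> t \<in> V"
    by (rule topological_tendstoD) (use G(1,2) \<phi>_y in simp_all)
  moreover have "\<forall>\<^sub>F t in at 0 within J. c t \<in> W"
    by (rule eventually_in_openin_ctop[OF lim W(1,2)])
  ultimately have "\<forall>\<^sub>F t in at 0 within J. f (c t) = G (\<Phi> t)"
  proof eventually_elim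
    case (elim t)
    then have "c t \<in> U" "\<phi> (c t) \<in> \<phi> ` U" using W(3) by auto
    then have "f (c t) = f (inv_into U \<phi> (\<Phi> t))"
      using inv_into_f_f[OF chart(2) \<open>c t \<in> U\<close>] \<phi>_c[OF elim(2)] by simp
    also have "\<dots> = G (\<Phi> t)"
      using G(4) elim(1) \<phi>_c[OF elim(2)] \<open>\<phi> (c t) \<in> \<phi> ` U\<close> by simp
    finally show ?case .
  qed
  moreover have "f (c 0) = G (\<Phi> 0)"
  proof -
    have "y \<in> U" using W(2,3) by blast
    then have "f (inv_into U \<phi> (\<phi> y)) = G (\<phi> y)" using G(4)[OF G(2)] by blast
    then show ?thesis using inv_into_f_f[OF chart(2) \<open>y \<in> U\<close>] c(1) \<phi>_y by simp
  qed
  moreover have "((\<lambda>t. G (\<Phi> t)) has_real_derivative (\<Sum>i<n. partial i G (\<Phi> 0) * X (fc i) y)) (at 0 within J)"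
  proof (rule has_real_derivative_C1_comp[OF _ \<Phi>_fvec])
    show "G \<in> Ck n (Suc 0)" using G(3) unfolding smooth_fun_def by blast
    show "((\<lambda>t. \<Phi> t i) has_real_derivative X (fc i) y) (at 0 within J)" if "i < n" for i
      using der0[OF fc(1)] that by (simp add: \<Phi>_def)
  qed
  ultimately have "((\<lambda>t. f (c t)) has_real_derivative (\<Sum>i<n. partial i G (\<phi> y) * X (fc i) y)) (at 0 within J)"
    unfolding \<phi>_y by (subst has_field_derivative_cong_eventually)
  then show ?thesis
    using has_field_derivative_unique der0[OF f] c(2) by blast
qed

interpretation fs: vector_space "\<lambda>(a::real) (v::('b \<Rightarrow> real) \<Rightarrow> real) f. a * v f"
  by unfold_locales (auto simp: fun_eq_iff algebra_simps)

lemma sum_fun_apply: "(\<Sum>a\<in>A. g a) x = (\<Sum>a\<in>A. g a x)"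
  by (induction A rule: infinite_finite_induct) auto

text \<open>Without this, dim would silently be 0 on an infinite-dimensional span.\<close>
lemma tvec_in_finite_span:
  assumes "subcartesian C"
  obtains E where "finite E" "\<And>X. vector_field C X \<Longrightarrow> tvec C X y \<in> fs.span E"
proof -
  from assms obtain U \<phi> n where chart: "openin (ctop C) U" "y \<in> U" "\<phi> ` U \<subseteq> fvec n" "inj_on \<phi> U"
    "\<And>g. rn_fun n (\<phi> ` U) g \<Longrightarrow> loc_fun C U (g \<circ> \<phi>)"
    "\<And>h. loc_fun C U h \<Longrightarrow> rn_fun n (\<phi> ` U) (h \<circ> inv_into U \<phi>)"
    unfolding subcartesian_def by metis
  obtain W fc where W: "openin (ctop C) W" "y \<in> W" "W \<subseteq> U"
    and fc: "\<And>i. fc i \<in> C" "\<And>i z. i < n \<Longrightarrow> z \<in> W \<Longrightarrow> fc i z = \<phi> z i"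
    using chart_coordinates[OF chart(1,2,5)] by blast
  have "\<forall>f\<in>C. \<exists>V G. open V \<and> \<phi> y \<in> V \<and> smooth_fun n G \<and>
      (\<forall>z\<in>V. z \<in> \<phi> ` U \<longrightarrow> f (inv_into U \<phi> z) = G z)"
  proof
    fix f assume "f \<in> C"
    with chart_representative[OF chart(6,2)] obtain V G where
      "open V" "\<phi> y \<in> V" "smooth_fun n G" "\<And>z. z \<in> V \<Longrightarrow> z \<in> \<phi> ` U \<Longrightarrow> f (inv_into U \<phi> z) = G z"
      by blast
    then show "\<exists>V G. open V \<and> \<phi> y \<in> V \<and> smooth_fun n G \<and>
        (\<forall>z\<in>V. z \<in> \<phi> ` U \<longrightarrow> f (inv_into U \<phi> z) = G z)"
      by blast
  qed
  from bchoice[OF this] obtain V where "\<forall>f\<in>C. \<exists>G. open (V f) \<and> \<phi> y \<in> V f \<and> smooth_fun n G \<and>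
      (\<forall>z\<in>V f. z \<in> \<phi> ` U \<longrightarrow> f (inv_into U \<phi> z) = G z)" ..
  from bchoice[OF this] obtain G where G: "\<forall>f\<in>C. open (V f) \<and> \<phi> y \<in> V f \<and> smooth_fun n (G f) \<and>
      (\<forall>z\<in>V f. z \<in> \<phi> ` U \<longrightarrow> f (inv_into U \<phi> z) = G f z)" ..
  define e where "e i = (\<lambda>f. if f \<in> C then partial i (G f) (\<phi> y) else 0)" for i
  show thesis
  proof (rule that[of "e ` {..<n}"])
    fix X assume X: "vector_field C X"
    have "tvec C X y = (\<Sum>i<n. (\<lambda>f. X (fc i) y * e i f))"
    proof
      fix f
      show "tvec C X y f = (\<Sum>i<n. (\<lambda>f. X (fc i) y * e i f)) f"
      proof (cases "f \<in> C")
        case True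
        with G have "X f y = (\<Sum>i<n. partial i (G f) (\<phi> y) * X (fc i) y)"
          by (intro vector_field_chart_expansion[OF X True chart(3,4) W fc, of "V f"]) auto
        with True show ?thesis
          unfolding sum_fun_apply tvec_def e_def by (simp add: mult.commute)
      qed (simp add: sum_fun_apply tvec_def e_def)
    qed
    also have "\<dots> \<in> fs.span (e ` {..<n})"
      by (intro fs.span_sum fs.span_scale fs.span_base) auto
    finally show "tvec C X y \<in> fs.span (e ` {..<n})" .
  qed simp
qed

lemma (in vector_space) card_le_dim_if_finite_span:
  assumes S: "independent S" "S \<subseteq> V" and E: "V \<subseteq> span E" "finite E"
  shows "card S \<le> dim V"
proof -
  obtain B where B: "B \<subseteq> V" "independent B" "V \<subseteq> span B" "card B = dim V"
    using basis_exists by blast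
  have "B \<subseteq> span E" using B(1) E(1) by blast
  then have "finite B" using independent_span_bound[OF E(2) B(2)] by blast
  moreover have "S \<subseteq> span B" using S(2) B(3) by blast
  ultimately show ?thesis using independent_span_bound[OF _ S(1)] B(4) by metis
qed

lemma (in vector_space) independent_family_iff:
  fixes k :: nat
  shows "(\<forall>a. (\<Sum>j<k. a j *s v j) = 0 \<longrightarrow> (\<forall>j<k. a j = 0)) \<longleftrightarrow>
    inj_on v {..<k} \<and> independent (v ` {..<k})"
proof
  assume H: "\<forall>a. (\<Sum>j<k. a j *s v j) = 0 \<longrightarrow> (\<forall>j<k. a j = 0)"
  have "inj_on v {..<k}"
  proof (rule inj_onI, rule ccontr)
    fix j1 j2 assume j: "j1 \<in> {..<k}" "j2 \<in> {..<k}" "v j1 = v j2" "j1 \<noteq> j2"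
    define a :: "nat \<Rightarrow> 'a" where "a j = (if j = j1 then 1 else if j = j2 then -1 else 0)" for j
    have "(\<Sum>j<k. a j *s v j) = (\<Sum>j\<in>{j1, j2}. a j *s v j)"
      by (rule sum.mono_neutral_right) (use j in \<open>auto simp: a_def\<close>)
    also have "\<dots> = 0" using j(3,4) by (simp add: a_def)
    finally have "a j1 = 0" using H[rule_format, of a j1] j(1) by blast
    then show False by (simp add: a_def)
  qed
  moreover have "independent (v ` {..<k})"
  proof (rule independent_if_scalars_zero)
    fix u w assume u: "(\<Sum>w\<in>v ` {..<k}. u w *s w) = 0" and w: "w \<in> v ` {..<k}"
    from u have "(\<Sum>j<k. u (v j) *s v j) = 0"
      by (simp add: sum.reindex[OF \<open>inj_on v {..<k}\<close>])
    with H[rule_format, of "u \<circ> v"] w show "u w = 0" by auto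
  qed simp
  ultimately show "inj_on v {..<k} \<and> independent (v ` {..<k})" ..
next
  assume inj: "inj_on v {..<k} \<and> independent (v ` {..<k})"
  show "\<forall>a. (\<Sum>j<k. a j *s v j) = 0 \<longrightarrow> (\<forall>j<k. a j = 0)"
  proof (intro allI impI)
    fix a j assume a: "(\<Sum>j<k. a j *s v j) = 0" and j: "j < k"
    define u where "u = a \<circ> inv_into {..<k} v"
    have "(\<Sum>w\<in>v ` {..<k}. u w *s w) = (\<Sum>j<k. a j *s v j)"
      using inj by (simp add: sum.reindex u_def)
    moreover have "\<forall>c. (\<Sum>w\<in>v ` {..<k}. c w *s w) = 0 \<longrightarrow> (\<forall>w\<in>v ` {..<k}. c w = 0)"
      using inj local.dependent_finite[of "v ` {..<k}"] by blast
    ultimately have "u (v j) = 0" using a j by simp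
    then show "a j = 0" using inj j by (simp add: u_def)
  qed
qed

lemma sum_scale_tvec_eq_0_iff:
  "(\<Sum>j<k. (\<lambda>f. a j * tvec C (X j) y f)) = 0 \<longleftrightarrow> (\<forall>f\<in>C. (\<Sum>j<k. a j * X j f y) = 0)"
proof
  assume sum0: "(\<Sum>j<k. (\<lambda>f. a j * tvec C (X j) y f)) = 0"
  show "\<forall>f\<in>C. (\<Sum>j<k. a j * X j f y) = 0"
  proof
    fix f assume "f \<in> C"
    have "(\<Sum>j<k. (\<lambda>f. a j * tvec C (X j) y f)) f = 0" by (simp add: sum0)
    with \<open>f \<in> C\<close> show "(\<Sum>j<k. a j * X j f y) = 0"
      by (simp add: sum_fun_apply tvec_def)
  qed
next
  assume sum0: "\<forall>f\<in>C. (\<Sum>j<k. a j * X j f y) = 0"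
  show "(\<Sum>j<k. (\<lambda>f. a j * tvec C (X j) y f)) = 0"
  proof
    fix f
    show "(\<Sum>j<k. (\<lambda>f. a j * tvec C (X j) y f)) f = 0 f"
      using sum0 by (cases "f \<in> C") (simp_all add: sum_fun_apply tvec_def)
  qed
qed

lemma lin_indep_on_iff_independent_tvec:
  "lin_indep_on k C (\<lambda>j f. X j f y) \<longleftrightarrow>
    inj_on (\<lambda>j. tvec C (X j) y) {..<k} \<and> fs.independent ((\<lambda>j. tvec C (X j) y) ` {..<k})"
  unfolding fs.independent_family_iff[symmetric] sum_scale_tvec_eq_0_iff lin_indep_on_def ..

lemma tvec_basis_fields:
  obtains Xs where "\<And>j. j < fs.dim {tvec C X x | X. X \<in> F} \<Longrightarrow> Xs j \<in> F"
    "lin_indep_on (fs.dim {tvec C X x | X. X \<in> F}) C (\<lambda>j f. Xs j f x)"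
proof -
  define V where "V = {tvec C X x | X. X \<in> F}"
  obtain B where B: "B \<subseteq> V" "fs.independent B" "card B = fs.dim V"
    by (rule fs.basis_exists[of V]) blast
  show thesis
  proof (cases "finite B")
    case False
    then have "fs.dim V = 0" using B(3) by simp
    moreover have "lin_indep_on 0 C w" for w by (rule lin_indep_onI) simp
    ultimately show thesis using that[of undefined] unfolding V_def by simp
  next
    case True
    from ex_bij_betw_nat_finite[OF True] obtain b where "bij_betw b {0..<card B} B" ..
    then have b: "bij_betw b {..<fs.dim V} B" using B(3) by (simp add: atLeast0LessThan)
    have "\<forall>j. \<exists>X. j < fs.dim V \<longrightarrow> X \<in> F \<and> b j = tvec C X x"
    proof
      fix j
      show "\<exists>X. j < fs.dim V \<longrightarrow> X \<in> F \<and> b j = tvec C X x"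
      proof (cases "j < fs.dim V")
        case True
        then have "b j \<in> V" using bij_betw_apply[OF b] B(1) by auto
        then show ?thesis unfolding V_def by blast
      qed simp
    qed
    from choice[OF this] obtain Xs where Xs: "\<forall>j. j < fs.dim V \<longrightarrow> Xs j \<in> F \<and> b j = tvec C (Xs j) x" ..
    have "inj_on (\<lambda>j. tvec C (Xs j) x) {..<fs.dim V}"
      using bij_betw_imp_inj_on[OF b] Xs by (simp add: inj_on_def)
    moreover have "(\<lambda>j. tvec C (Xs j) x) ` {..<fs.dim V} = B"
      using bij_betw_imp_surj_on[OF b] Xs by (simp add: image_def)
    ultimately have "lin_indep_on (fs.dim V) C (\<lambda>j f. Xs j f x)"
      using B(2) by (simp add: lin_indep_on_iff_independent_tvec)
    with Xs show thesis using that[of Xs] unfolding V_def by blast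
  qed
qed

lemma lin_indep_on_le_dim:
  assumes "subcartesian C" "\<forall>X\<in>F. vector_field C X"
    and "\<And>j. j < k \<Longrightarrow> Xs j \<in> F" "lin_indep_on k C (\<lambda>j f. Xs j f y)"
  shows "k \<le> fs.dim {tvec C X y | X. X \<in> F}"
proof -
  let ?v = "\<lambda>j. tvec C (Xs j) y"
  obtain E where E: "finite E" "\<And>X. vector_field C X \<Longrightarrow> tvec C X y \<in> fs.span E"
    using tvec_in_finite_span[OF assms(1)] by blast
  have indep: "inj_on ?v {..<k}" "fs.independent (?v ` {..<k})"
    using assms(4) by (simp_all add: lin_indep_on_iff_independent_tvec)
  have "?v ` {..<k} \<subseteq> {tvec C X y | X. X \<in> F}" using assms(3) by blast
  moreover have "{tvec C X y | X. X \<in> F} \<subseteq> fs.span E" using E(2) assms(2) by blast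
  ultimately have "card (?v ` {..<k}) \<le> fs.dim {tvec C X y | X. X \<in> F}"
    by (rule fs.card_le_dim_if_finite_span[OF indep(2) _ _ E(1)])
  with indep(1) show ?thesis by (simp add: card_image)
qed

lemma continuous_map_vector_field_apply:
  assumes "vector_field C X" "f \<in> C"
  shows "continuous_map (ctop C) euclideanreal (X f)"
proof -
  have "derivation C X" using assms(1) unfolding vector_field_def by blast
  then have "X f \<in> C" using assms(2) unfolding derivation_def by blast
  then show ?thesis by (rule continuous_map_ctop)
qed

theorem lemmal:
  fixes C :: "('a \<Rightarrow> real) set"
    and F :: "(('a \<Rightarrow> real) \<Rightarrow> ('a \<Rightarrow> real)) set"
  assumes "subcartesian C"
    and "\<forall>X\<in>F. vector_field C X"
  shows "lower_semicontinuous (ctop C) (delta C F)"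
  unfolding lower_semicontinuous_def
proof (intro ballI allI impI)
  fix x :: 'a and r :: real
  assume r: "r < real_of_int (delta C F x)"
  have delta: "delta C F y = int (fs.dim {tvec C X y | X. X \<in> F})" for y
    unfolding delta_def ..
  define k where "k = fs.dim {tvec C X x | X. X \<in> F}"
  obtain Xs where Xs: "\<And>j. j < k \<Longrightarrow> Xs j \<in> F" "lin_indep_on k C (\<lambda>j f. Xs j f x)"
    using tvec_basis_fields[where C = C and x = x and F = F, folded k_def] by blast
  have "\<forall>j<k. \<forall>f\<in>C. continuous_map (subtopology (ctop C) UNIV) euclideanreal (\<lambda>y. Xs j f y)"
    using assms(2) Xs(1) by (simp add: continuous_map_vector_field_apply)
  from lin_indep_on_locally[OF openin_ctop_UNIV UNIV_I this Xs(2)] obtain U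
    where U: "openin (ctop C) U" "x \<in> U" "\<forall>y\<in>U. lin_indep_on k C (\<lambda>j f. Xs j f y)"
    by blast
  have "r < real_of_int (delta C F y)" if "y \<in> U" for y
    using lin_indep_on_le_dim[OF assms Xs(1) U(3)[rule_format, OF that]] r
    unfolding delta k_def by simp
  with U(1,2) show "\<exists>U. openin (ctop C) U \<and> x \<in> U \<and> (\<forall>y\<in>U. r < real_of_int (delta C F y))"
    by blast
qed

end
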